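(* Let $D$ be a strongly connected orientation of $G^\circ$ (the graph $G$ with its bridges deleted) and let $v^D\in H$ be the unique flow with $2\langle v^D,x^C\rangle=q(x^C)$ for every circuit $C\subseteq D$. Then $2\,q(v^D)=\sum_{e\in D}v^D_e$.
   Context: $G=(V,E)$ is a finite connected graph, possibly with parallel edges and loops; $\mathbb E$ is the set of oriented edges ($e$ and its reverse $\bar e$). Real $1$-chains $x:\mathbb E\to\mathbb R$ satisfy $x_{\bar e}=-x_e$; $\langle x,y\rangle=\sum_{e\in E}x_ey_e$, $q(x)=\langle x,x\rangle$. A flow satisfies $\sum_{e\text{ with tail }v}x_e=0$ at every vertex $v$; $H$ is the space of real flows. A circuit is an orientation of a cycle as a directed cycle; $x^C_e=1$ if $e\in C$, $-1$ if $\bar e\in C$, $0$ otherwise. An orientation (a set of oriented edges with exactly one of $e,\bar e$ per edge) is strongly connected if on each connected component any two vertices are joined by directed paths in both directions. *)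

theory Defs
  imports Complex_Main
begin

text \<open>A finite multigraph is given by a vertex set V, an edge set E and endpoint maps
  src, tgt (loops: src e = tgt e; parallel edges: distinct edges with equal endpoints).
  An oriented edge is a pair (e, b): (e, True) is e, (e, False) is its reverse.\<close>

type_synonym 'e oedge = "'e \<times> bool"

definition otail :: "('e \<Rightarrow> 'v) \<Rightarrow> ('e \<Rightarrow> 'v) \<Rightarrow> 'e oedge \<Rightarrow> 'v" where
  "otail src tgt a = (if snd a then src (fst a) else tgt (fst a))"

definition ohead :: "('e \<Rightarrow> 'v) \<Rightarrow> ('e \<Rightarrow> 'v) \<Rightarrow> 'e oedge \<Rightarrow> 'v" where
  "ohead src tgt a = (if snd a then tgt (fst a) else src (fst a))"

definition orev :: "'e oedge \<Rightarrow> 'e oedge" where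
  "orev a = (fst a, \<not> snd a)"

definition oedges :: "'e set \<Rightarrow> 'e oedge set" where
  "oedges E = E \<times> UNIV"

definition is_chain :: "'e set \<Rightarrow> ('e oedge \<Rightarrow> real) \<Rightarrow> bool" where
  "is_chain E x \<longleftrightarrow> (\<forall>a \<in> oedges E. x (orev a) = - x a)"

definition inner_ch :: "'e set \<Rightarrow> ('e oedge \<Rightarrow> real) \<Rightarrow> ('e oedge \<Rightarrow> real) \<Rightarrow> real" where
  "inner_ch E x y = (\<Sum>e\<in>E. x (e, True) * y (e, True))"

definition qf :: "'e set \<Rightarrow> ('e oedge \<Rightarrow> real) \<Rightarrow> real" where
  "qf E x = inner_ch E x x"

definition is_flow :: "'v set \<Rightarrow> 'e set \<Rightarrow> ('e \<Rightarrow> 'v) \<Rightarrow> ('e \<Rightarrow> 'v) \<Rightarrow> ('e oedge \<Rightarrow> real) \<Rightarrow> bool" where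
  "is_flow V E src tgt x \<longleftrightarrow> is_chain E x \<and>
     (\<forall>v \<in> V. (\<Sum>a \<in> {a \<in> oedges E. otail src tgt a = v}. x a) = 0)"

definition uadj :: "'e set \<Rightarrow> ('e \<Rightarrow> 'v) \<Rightarrow> ('e \<Rightarrow> 'v) \<Rightarrow> ('v \<times> 'v) set" where
  "uadj E src tgt = {(src e, tgt e) | e. e \<in> E} \<union> {(tgt e, src e) | e. e \<in> E}"

definition connected_graph :: "'v set \<Rightarrow> 'e set \<Rightarrow> ('e \<Rightarrow> 'v) \<Rightarrow> ('e \<Rightarrow> 'v) \<Rightarrow> bool" where
  "connected_graph V E src tgt \<longleftrightarrow> (\<forall>u \<in> V. \<forall>w \<in> V. (u, w) \<in> (uadj E src tgt)\<^sup>*)"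

definition bridges :: "'v set \<Rightarrow> 'e set \<Rightarrow> ('e \<Rightarrow> 'v) \<Rightarrow> ('e \<Rightarrow> 'v) \<Rightarrow> 'e set" where
  "bridges V E src tgt = {e \<in> E. \<not> connected_graph V (E - {e}) src tgt}"

definition dadj :: "('e \<Rightarrow> 'v) \<Rightarrow> ('e \<Rightarrow> 'v) \<Rightarrow> 'e oedge set \<Rightarrow> ('v \<times> 'v) set" where
  "dadj src tgt D = {(otail src tgt a, ohead src tgt a) | a. a \<in> D}"

definition is_orientation :: "'e set \<Rightarrow> 'e oedge set \<Rightarrow> bool" where
  "is_orientation E D \<longleftrightarrow> D \<subseteq> oedges E \<and> (\<forall>e \<in> E. ((e, True) \<in> D) \<noteq> ((e, False) \<in> D))"

text \<open>Strongly connected orientation of the graph (V, E): within each connected component,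
  any two vertices are joined by directed paths (in both directions, by symmetry of
  undirected reachability).\<close>
definition strongly_connected_orientation ::
  "'v set \<Rightarrow> 'e set \<Rightarrow> ('e \<Rightarrow> 'v) \<Rightarrow> ('e \<Rightarrow> 'v) \<Rightarrow> 'e oedge set \<Rightarrow> bool" where
  "strongly_connected_orientation V E src tgt D \<longleftrightarrow> is_orientation E D \<and>
     (\<forall>u \<in> V. \<forall>w \<in> V. (u, w) \<in> (uadj E src tgt)\<^sup>* \<longrightarrow> (u, w) \<in> (dadj src tgt D)\<^sup>*)"

text \<open>A circuit: a cycle oriented as a directed cycle, given as a nonempty cyclic list of
  oriented edges with distinct underlying edges and distinct vertices.\<close>
definition is_circuit_list :: "'e set \<Rightarrow> ('e \<Rightarrow> 'v) \<Rightarrow> ('e \<Rightarrow> 'v) \<Rightarrow> 'e oedge list \<Rightarrow> bool" where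
  "is_circuit_list E src tgt cs \<longleftrightarrow> cs \<noteq> [] \<and> set cs \<subseteq> oedges E \<and>
     distinct (map fst cs) \<and> distinct (map (otail src tgt) cs) \<and>
     (\<forall>i < length cs. ohead src tgt (cs ! i) = otail src tgt (cs ! ((i + 1) mod length cs)))"

definition is_circuit :: "'e set \<Rightarrow> ('e \<Rightarrow> 'v) \<Rightarrow> ('e \<Rightarrow> 'v) \<Rightarrow> 'e oedge set \<Rightarrow> bool" where
  "is_circuit E src tgt C \<longleftrightarrow> (\<exists>cs. is_circuit_list E src tgt cs \<and> C = set cs)"

definition circ_chain :: "'e oedge set \<Rightarrow> 'e oedge \<Rightarrow> real" where
  "circ_chain C a = (if a \<in> C then 1 else if orev a \<in> C then -1 else 0)"

end

theory Submission
  imports Defs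
begin

(*
  Put g a = 2 vD(a) - 1 on the arcs of D.  For a circuit C in D the hypothesis
  2<vD, x^C> = q(x^C) = |C| says exactly that g sums to zero along C.  Every closed walk in D
  splits into circuits, so g sums to zero along every closed walk.  Since D is strongly
  connected (every arc lies on a closed walk), g is then a potential difference:
  g a = p(head a) - p(tail a).  Bridges carry no flow, so
     sum_{a in D} vD a = sum_{e in E} (2 vD_e^2 - vD_e (p(tgt e) - p(src e))) = 2 q(vD) - <vD, dp>,
  and <vD, dp> = 0 because a flow is orthogonal to every coboundary.
*)

lemma chain_reverse:
  assumes "is_chain E x" and "e \<in> E"
  shows "x (e, False) = - x (e, True)"
proof -
  have "(e, True) \<in> oedges E" using assms(2) by (simp add: oedges_def)
  then have "x (orev (e, True)) = - x (e, True)" using assms(1) by (simp add: is_chain_def)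
  then show ?thesis by (simp add: orev_def)
qed

lemma orientation_inj_fst:
  assumes "is_orientation E D"
  shows "inj_on fst D"
proof (rule inj_onI)
  fix a b assume ab: "a \<in> D" "b \<in> D" "fst a = fst b"
  then have "fst a \<in> E" using assms by (auto simp: is_orientation_def oedges_def)
  then have "((fst a, True) \<in> D) \<noteq> ((fst a, False) \<in> D)"
    using assms by (simp add: is_orientation_def)
  then show "a = b" using ab by (cases a; cases b; cases "snd a"; cases "snd b") auto
qed

lemma sum_orientation:
  assumes "is_orientation E D"
  shows "(\<Sum>a\<in>D. f a) = (\<Sum>e\<in>E. f (e, (e, True) \<in> D))"
proof -
  have "D = (\<lambda>e. (e, (e, True) \<in> D)) ` E"
  proof (intro set_eqI iffI)
    fix a assume a: "a \<in> D"
    then have "fst a \<in> E" using assms by (auto simp: is_orientation_def oedges_def)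
    moreover have "a = (fst a, (fst a, True) \<in> D)"
      using a \<open>fst a \<in> E\<close> assms unfolding is_orientation_def by (cases a; cases "snd a") auto
    ultimately show "a \<in> (\<lambda>e. (e, (e, True) \<in> D)) ` E" by blast
  next
    fix a assume "a \<in> (\<lambda>e. (e, (e, True) \<in> D)) ` E"
    then show "a \<in> D" using assms unfolding is_orientation_def by fastforce
  qed
  moreover have "inj_on (\<lambda>e. (e, (e, True) \<in> D)) E" by (rule inj_onI) simp
  ultimately show ?thesis by (metis (no_types, lifting) sum.reindex_cong)
qed

fun walk :: "('e \<Rightarrow> 'v) \<Rightarrow> ('e \<Rightarrow> 'v) \<Rightarrow> 'e oedge set \<Rightarrow> 'v \<Rightarrow> 'e oedge list \<Rightarrow> 'v \<Rightarrow> bool" where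
  "walk s t D x [] y = (x = y)"
| "walk s t D x (a # ws) y = (a \<in> D \<and> otail s t a = x \<and> walk s t D (ohead s t a) ws y)"

lemma walk_append: "walk s t D x (A @ B) y \<longleftrightarrow> (\<exists>z. walk s t D x A z \<and> walk s t D z B y)"
  by (induction A arbitrary: x) auto

lemma walk_set: "walk s t D x ws y \<Longrightarrow> set ws \<subseteq> D"
  by (induction ws arbitrary: x) auto

lemma walk_first: "walk s t D x ws y \<Longrightarrow> ws \<noteq> [] \<Longrightarrow> otail s t (ws ! 0) = x"
  by (cases ws) auto

lemma walk_last: "walk s t D x ws y \<Longrightarrow> ws \<noteq> [] \<Longrightarrow> ohead s t (last ws) = y"
  by (induction ws arbitrary: x) (auto simp: neq_Nil_conv)

lemma walk_consecutive: "walk s t D x ws y \<Longrightarrow> i + 1 < length ws \<Longrightarrow>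
    ohead s t (ws ! i) = otail s t (ws ! (i + 1))"
proof (induction ws arbitrary: x i)
  case (Cons a ws)
  then show ?case by (cases i) (auto simp: neq_Nil_conv)
qed simp

lemma rtrancl_dadj_walk:
  assumes "(x, y) \<in> (dadj s t D)\<^sup>*"
  shows "\<exists>ws. walk s t D x ws y"
  using assms
proof (induction rule: rtrancl_induct)
  case base
  have "walk s t D x [] x" by simp
  then show ?case by blast
next
  case (step y z)
  then obtain ws where "walk s t D x ws y" by blast
  moreover from step(2) obtain a where "a \<in> D" "otail s t a = y" "ohead s t a = z"
    unfolding dadj_def by auto
  ultimately have "walk s t D x (ws @ [a]) z" by (auto simp: walk_append)
  then show ?case by blast
qed

lemma closed_walk_circuit:
  assumes w: "walk s t D x ws x" and ne: "ws \<noteq> []"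
    and dt: "distinct (map (otail s t) ws)"
    and DE: "D \<subseteq> oedges E" and inj: "inj_on fst D"
  shows "is_circuit_list E s t ws"
proof -
  have dfst: "distinct (map fst ws)"
    using dt walk_set[OF w] inj by (simp add: distinct_map inj_on_subset)
  have "ohead s t (ws ! i) = otail s t (ws ! ((i + 1) mod length ws))"
    if i: "i < length ws" for i
  proof (cases "i + 1 < length ws")
    case True
    then show ?thesis using walk_consecutive[OF w True] by simp
  next
    case False
    then have "i + 1 = length ws" using i by simp
    then have "ws ! i = last ws" and "(i + 1) mod length ws = 0"
      using ne last_conv_nth[OF ne] by (metis add_diff_cancel_right', simp)
    then show ?thesis using walk_last[OF w ne] walk_first[OF w ne] by simp
  qed
  then show ?thesis
    unfolding is_circuit_list_def using ne walk_set[OF w] DE dfst dt by auto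
qed

text \<open>A repeated vertex splits the
  walk into two shorter closed walks.\<close>
lemma closed_walk_sum:
  assumes simple: "\<And>ws x. ws \<noteq> [] \<Longrightarrow> walk s t D x ws x \<Longrightarrow> distinct (map (otail s t) ws) \<Longrightarrow>
        sum_list (map g ws) = (0::real)"
  shows "walk s t D x ws x \<Longrightarrow> sum_list (map g ws) = 0"
proof (induction "length ws" arbitrary: ws x rule: less_induct)
  case less
  show ?case
  proof (cases "ws = [] \<or> distinct (map (otail s t) ws)")
    case True
    then show ?thesis using simple[of ws x] less.prems by (cases "ws = []") auto
  next
    case False
    then obtain i0 j0 where "i0 < length ws" "j0 < length ws" "i0 \<noteq> j0"
        "otail s t (ws ! i0) = otail s t (ws ! j0)"
      by (auto simp: distinct_conv_nth)
    then obtain i j where ij: "i < j" "j < length ws" "otail s t (ws ! i) = otail s t (ws ! j)"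
      by (metis linorder_neqE_nat)
    define A B C where "A = take i ws" and "B = take (j - i) (drop i ws)" and "C = drop j ws"
    have ws: "ws = A @ B @ C"
      unfolding A_def B_def C_def using ij
      by (metis append_take_drop_id drop_drop le_add_diff_inverse2 less_imp_le)
    have len: "length A = i" "length B = j - i" "length C = length ws - j"
      using ij unfolding A_def B_def C_def by auto
    obtain z1 z2 where w1: "walk s t D x A z1" and w2: "walk s t D z1 B z2"
      and w3: "walk s t D z2 C x"
      using less.prems ws walk_append by metis
    have "B ! 0 = ws ! i" "C ! 0 = ws ! j" using ij unfolding B_def C_def by auto
    then have "z1 = z2" using walk_first[OF w2] walk_first[OF w3] ij len by force
    then have "walk s t D z1 B z1" and "walk s t D z1 (C @ A) z1"
      using w1 w2 w3 walk_append by metis+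
    moreover have "length B < length ws" "length (C @ A) < length ws" using len ij by auto
    ultimately have "sum_list (map g B) = 0" "sum_list (map g (C @ A)) = 0"
      using less.hyps by blast+
    then show ?thesis using ws by simp
  qed
qed

text \<open>If g sums to zero along all closed walks of D and every arc of D lies on a closed walk,
  then g is the coboundary of a potential p: fix a representative in every strong component
  and let p(w) be the g-length of a walk from the representative to w.\<close>
lemma potential_exists:
  assumes closed_zero: "\<And>ws x. walk s t D x ws x \<Longrightarrow> sum_list (map g ws) = (0::real)"
    and arc_on_cycle: "\<And>a. a \<in> D \<Longrightarrow> (ohead s t a, otail s t a) \<in> (dadj s t D)\<^sup>*"
  shows "\<exists>p. \<forall>a\<in>D. g a = p (ohead s t a) - p (otail s t a)"
proof -
  let ?R = "(dadj s t D)\<^sup>*"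
  define rep where "rep w = (SOME r. (r, w) \<in> ?R \<and> (w, r) \<in> ?R)" for w
  have rep: "(rep w, w) \<in> ?R \<and> (w, rep w) \<in> ?R" for w
    unfolding rep_def by (rule someI[of _ w]) simp
  define path where "path w = (SOME ws. walk s t D (rep w) ws w)" for w
  have path: "walk s t D (rep w) (path w) w" for w
    unfolding path_def using rtrancl_dadj_walk rep by (metis someI)
  define p where "p w = sum_list (map g (path w))" for w
  have "g a = p (ohead s t a) - p (otail s t a)" if a: "a \<in> D" for a
  proof -
    let ?h = "ohead s t a" and ?t = "otail s t a"
    have th: "(?t, ?h) \<in> ?R" using a unfolding dadj_def by blast
    have ht: "(?h, ?t) \<in> ?R" using arc_on_cycle[OF a] .
    have "rep ?t = rep ?h"
    proof -
      have "(r, ?t) \<in> ?R \<and> (?t, r) \<in> ?R \<longleftrightarrow> (r, ?h) \<in> ?R \<and> (?h, r) \<in> ?R" for r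
        using th ht rtrancl_trans by metis
      then show ?thesis unfolding rep_def by simp
    qed
    obtain W where W: "walk s t D ?h W (rep ?h)"
      using rep[of ?h] rtrancl_dadj_walk by metis
    have "walk s t D (rep ?h) (path ?t @ [a] @ W) (rep ?h)"
      using path[of ?t] \<open>rep ?t = rep ?h\<close> a W by (auto simp: walk_append)
    moreover have "walk s t D (rep ?h) (path ?h @ W) (rep ?h)"
      using path[of ?h] W walk_append by metis
    ultimately have "p ?t + g a + sum_list (map g W) = 0" "p ?h + sum_list (map g W) = 0"
      using closed_zero unfolding p_def by fastforce+
    then show ?thesis by linarith
  qed
  then show ?thesis by blast
qed

text \<open>A flow is orthogonal to every coboundary: summing the conservation law at each vertex
  against a potential p gives the sum of v over edges of the potential differences.\<close>
lemma flow_orthogonal_coboundary: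
  assumes finV: "finite V" and finE: "finite E"
    and ends: "\<forall>e\<in>E. src e \<in> V \<and> tgt e \<in> V" and flow: "is_flow V E src tgt v"
  shows "(\<Sum>e\<in>E. v (e, True) * (p (tgt e) - p (src e))) = 0"
proof -
  have finO: "finite (oedges E)" unfolding oedges_def using finE by simp
  have tails: "otail src tgt ` oedges E \<subseteq> V" using ends by (auto simp: oedges_def otail_def)
  have chain: "is_chain E v" using flow by (simp add: is_flow_def)
  have "0 = (\<Sum>w\<in>V. p w * (\<Sum>a\<in>{a\<in>oedges E. otail src tgt a = w}. v a))"
    using flow by (simp add: is_flow_def)
  also have "\<dots> = (\<Sum>w\<in>V. \<Sum>a\<in>{a\<in>oedges E. otail src tgt a = w}. p (otail src tgt a) * v a)"
    by (rule sum.cong) (auto simp: sum_distrib_left)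
  also have "\<dots> = (\<Sum>a\<in>oedges E. p (otail src tgt a) * v a)"
    by (rule sum.group[OF finO finV tails])
  also have "\<dots> = (\<Sum>e\<in>E. \<Sum>b\<in>UNIV. p (otail src tgt (e, b)) * v (e, b))"
    by (simp add: oedges_def sum.cartesian_product)
  also have "\<dots> = (\<Sum>e\<in>E. - (v (e, True) * (p (tgt e) - p (src e))))"
    by (rule sum.cong) (simp_all add: UNIV_bool otail_def chain_reverse[OF chain] algebra_simps)
  finally show ?thesis by (simp add: sum_negf)
qed

text \<open>The net flow out of any set S of vertices is zero: the conservation laws at the vertices
  of S add up to it, the arcs inside S cancelling in pairs by antisymmetry.\<close>
lemma flow_out_of_set:
  assumes finV: "finite V" and finE: "finite E" and SV: "S \<subseteq> V"
    and flow: "is_flow V E src tgt v"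
  shows "(\<Sum>a\<in>{a\<in>oedges E. otail src tgt a \<in> S \<and> ohead src tgt a \<notin> S}. v a) = 0"
proof -
  define T where "T = {a\<in>oedges E. otail src tgt a \<in> S}"
  define Inner where "Inner = {a\<in>T. ohead src tgt a \<in> S}"
  define Out where "Out = {a\<in>T. ohead src tgt a \<notin> S}"
  have finT: "finite T" unfolding T_def oedges_def using finE by simp
  have finS: "finite S" using finV SV finite_subset by blast
  have "(\<Sum>a\<in>T. v a) = (\<Sum>w\<in>S. \<Sum>a\<in>{a\<in>T. otail src tgt a = w}. v a)"
    by (rule sum.group[symmetric, OF finT finS]) (auto simp: T_def)
  also have "\<dots> = (\<Sum>w\<in>S. \<Sum>a\<in>{a\<in>oedges E. otail src tgt a = w}. v a)"
    by (rule sum.cong[OF refl]) (auto simp: T_def intro: sum.cong)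
  also have "\<dots> = 0" using flow SV by (intro sum.neutral) (auto simp: is_flow_def)
  finally have sumT: "(\<Sum>a\<in>T. v a) = 0" .
  have rev_Inner: "orev ` Inner = Inner"
  proof -
    have "orev a \<in> Inner" if "a \<in> Inner" for a
      using that unfolding Inner_def T_def oedges_def orev_def otail_def ohead_def by auto
    moreover have "orev (orev a) = a" for a by (simp add: orev_def)
    ultimately show ?thesis by (metis (no_types, lifting) image_eqI image_subset_iff subsetI subset_antisym)
  qed
  have "inj_on orev Inner" by (rule inj_onI) (simp add: orev_def prod_eq_iff)
  then have "(\<Sum>a\<in>Inner. v a) = (\<Sum>a\<in>Inner. v (orev a))"
    using sum.reindex[of orev Inner v] rev_Inner by simp
  also have "\<dots> = - (\<Sum>a\<in>Inner. v a)"
    using flow by (simp add: sum_negf is_flow_def is_chain_def Inner_def T_def)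
  finally have "(\<Sum>a\<in>Inner. v a) = 0" by simp
  moreover have "T = Inner \<union> Out" "Inner \<inter> Out = {}" "finite Inner" "finite Out"
    using finT by (auto simp: Inner_def Out_def)
  then have "(\<Sum>a\<in>T. v a) = (\<Sum>a\<in>Inner. v a) + (\<Sum>a\<in>Out. v a)"
    by (simp add: sum.union_disjoint)
  ultimately show ?thesis using sumT by (simp add: Out_def T_def conj_assoc)
qed

lemma bridge_separates:
  assumes conn: "connected_graph V E src tgt" and br: "e \<in> bridges V E src tgt"
  shows "(src e, tgt e) \<notin> (uadj (E - {e}) src tgt)\<^sup>*"
proof
  let ?U = "uadj (E - {e}) src tgt"
  assume path: "(src e, tgt e) \<in> ?U\<^sup>*"
  have "sym (?U\<^sup>*)" by (rule sym_rtrancl) (auto simp: uadj_def sym_def)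
  then have "(tgt e, src e) \<in> ?U\<^sup>*" using path by (auto simp: sym_def)
  then have "uadj E src tgt \<subseteq> ?U\<^sup>*"
    using path by (auto simp: uadj_def intro: r_into_rtrancl)
  then have "(uadj E src tgt)\<^sup>* \<subseteq> ?U\<^sup>*" by (rule rtrancl_subset_rtrancl)
  then have "connected_graph V (E - {e}) src tgt" using conn by (auto simp: connected_graph_def)
  then show False using br by (simp add: bridges_def)
qed

text \<open>A flow vanishes on every bridge: the bridge is the only arc leaving the component of
  its tail in the graph without it.\<close>
lemma flow_bridge_zero:
  assumes finV: "finite V" and finE: "finite E"
    and ends: "\<forall>e\<in>E. src e \<in> V \<and> tgt e \<in> V" and flow: "is_flow V E src tgt v"
    and conn: "connected_graph V E src tgt" and br: "e \<in> bridges V E src tgt"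
  shows "v (e, True) = 0"
proof -
  let ?U = "uadj (E - {e}) src tgt"
  define S where "S = {w\<in>V. (src e, w) \<in> ?U\<^sup>*}"
  have eE: "e \<in> E" using br by (simp add: bridges_def)
  have tgt_out: "tgt e \<notin> S" using bridge_separates[OF conn br] by (simp add: S_def)
  have src_in: "src e \<in> S" using ends eE by (simp add: S_def)
  have "{a\<in>oedges E. otail src tgt a \<in> S \<and> ohead src tgt a \<notin> S} = {(e, True)}"
  proof (intro set_eqI iffI)
    fix a assume a: "a \<in> {a\<in>oedges E. otail src tgt a \<in> S \<and> ohead src tgt a \<notin> S}"
    obtain e' b where ab: "a = (e', b)" by (cases a)
    have e'E: "e' \<in> E" using a ab by (simp add: oedges_def)
    show "a \<in> {(e, True)}"
    proof (cases "e' = e")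
      case True
      then show ?thesis using a ab tgt_out by (cases b) (auto simp: otail_def)
    next
      case False
      then have "(otail src tgt a, ohead src tgt a) \<in> ?U"
        using e'E ab by (cases b) (auto simp: uadj_def otail_def ohead_def)
      moreover have "ohead src tgt a \<in> V" using e'E ends ab by (simp add: ohead_def)
      ultimately have "ohead src tgt a \<in> S" using a by (auto simp: S_def intro: rtrancl_into_rtrancl)
      then show ?thesis using a by simp
    qed
  qed (use eE src_in tgt_out in \<open>auto simp: oedges_def otail_def ohead_def\<close>)
  moreover have "S \<subseteq> V" by (auto simp: S_def)
  then have "(\<Sum>a\<in>{a\<in>oedges E. otail src tgt a \<in> S \<and> ohead src tgt a \<notin> S}. v a) = 0"
    by (rule flow_out_of_set[OF finV finE _ flow])
  ultimately show ?thesis by simp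
qed

lemma inner_circ_chain:
  assumes finE: "finite E" and CE: "C \<subseteq> oedges E"
    and one_dir: "\<And>e. \<not> ((e, True) \<in> C \<and> (e, False) \<in> C)"
    and chain: "\<And>e. e \<in> E \<Longrightarrow> f (e, False) = - f (e, True)"
  shows "inner_ch E f (circ_chain C) = (\<Sum>a\<in>C. f a)"
proof -
  have finC: "finite C" using CE finE by (auto simp: oedges_def intro: finite_subset)
  have fstC: "fst ` C \<subseteq> E" using CE by (auto simp: oedges_def)
  have "f (e, True) * circ_chain C (e, True) = (\<Sum>a\<in>{a\<in>C. fst a = e}. f a)"
    if e: "e \<in> E" for e
  proof -
    have edge_arcs: "{a\<in>C. fst a = e} = {a\<in>{(e, True), (e, False)}. a \<in> C}"
      by (auto intro: prod_eqI)
    have "(\<Sum>a\<in>{a\<in>C. fst a = e}. f a) = (\<Sum>a\<in>{(e, True), (e, False)}. if a \<in> C then f a else 0)"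
      unfolding edge_arcs by (rule sum.inter_filter) simp
    also have "\<dots> = (if (e, True) \<in> C then f (e, True) else 0) + (if (e, False) \<in> C then f (e, False) else 0)"
      by simp
    finally show ?thesis using chain[OF e] one_dir[of e] by (simp add: circ_chain_def orev_def)
  qed
  then have "inner_ch E f (circ_chain C) = (\<Sum>e\<in>E. \<Sum>a\<in>{a\<in>C. fst a = e}. f a)"
    unfolding inner_ch_def by (rule sum.cong[OF refl])
  also have "\<dots> = (\<Sum>a\<in>C. f a)" by (rule sum.group[OF finC finE fstC])
  finally show ?thesis .
qed

text \<open>For a circuit C the hypothesis 2 <v, x^C> = q(x^C) says that 2 v - 1 sums to zero
  along C, since q(x^C) = |C|.\<close>
lemma circuit_condition_sum:
  assumes finE: "finite E" and CE: "C \<subseteq> oedges E"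
    and one_dir: "\<And>e. \<not> ((e, True) \<in> C \<and> (e, False) \<in> C)"
    and chain: "is_chain E v"
    and cond: "2 * inner_ch E v (circ_chain C) = qf E (circ_chain C)"
  shows "(\<Sum>a\<in>C. 2 * v a - 1) = 0"
proof -
  have "inner_ch E v (circ_chain C) = (\<Sum>a\<in>C. v a)"
    using inner_circ_chain[OF finE CE one_dir] chain_reverse[OF chain] by blast
  moreover have "qf E (circ_chain C) = (\<Sum>a\<in>C. circ_chain C a)"
    unfolding qf_def using one_dir
    by (intro inner_circ_chain[OF finE CE one_dir]) (auto simp: circ_chain_def orev_def)
  moreover have "(\<Sum>a\<in>C. circ_chain C a) = (\<Sum>a\<in>C. 1)"
    by (rule sum.cong) (auto simp: circ_chain_def)
  ultimately show ?thesis using cond by (simp add: sum_subtractf sum_distrib_left)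
qed

lemma circuit_condition_closed_walks:
  assumes finE: "finite E" and DE: "D \<subseteq> oedges E" and inj: "inj_on fst D"
    and chain: "is_chain E v"
    and cond: "\<forall>C. is_circuit E src tgt C \<and> C \<subseteq> D \<longrightarrow>
           2 * inner_ch E v (circ_chain C) = qf E (circ_chain C)"
    and w: "walk src tgt D x ws x"
  shows "sum_list (map (\<lambda>a. 2 * v a - 1) ws) = 0"
proof (rule closed_walk_sum[of src tgt D "\<lambda>a. 2 * v a - 1", OF _ w])
  fix ws x assume ne: "ws \<noteq> []" and w: "walk src tgt D x ws x"
    and dt: "distinct (map (otail src tgt) ws)"
  have CD: "set ws \<subseteq> D" by (rule walk_set[OF w])
  have "is_circuit E src tgt (set ws)"
    unfolding is_circuit_def using closed_walk_circuit[OF w ne dt DE inj] by blast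
  then have "2 * inner_ch E v (circ_chain (set ws)) = qf E (circ_chain (set ws))"
    using cond CD by blast
  moreover have "\<not> ((e, True) \<in> set ws \<and> (e, False) \<in> set ws)" for e
    using CD inj_onD[OF inj, of "(e, True)" "(e, False)"] by auto
  ultimately have "(\<Sum>a\<in>set ws. 2 * v a - 1) = 0"
    using circuit_condition_sum[OF finE _ _ chain] CD DE by blast
  moreover have "distinct ws" using dt by (simp add: distinct_map)
  ultimately show "sum_list (map (\<lambda>a. 2 * v a - 1) ws) = 0"
    by (simp add: sum_list_distinct_conv_sum_set)
qed

lemma strongly_connected_arc_reversible:
  assumes sc: "strongly_connected_orientation V E src tgt D"
    and ends: "\<forall>e\<in>E. src e \<in> V \<and> tgt e \<in> V" and a: "a \<in> D"
  shows "(ohead src tgt a, otail src tgt a) \<in> (dadj src tgt D)\<^sup>*"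
proof -
  obtain e b where ab: "a = (e, b)" by (cases a)
  have e: "e \<in> E" using sc a ab by (auto simp: strongly_connected_orientation_def
        is_orientation_def oedges_def)
  have "(ohead src tgt a, otail src tgt a) \<in> uadj E src tgt"
    using e ab by (cases b) (auto simp: uadj_def ohead_def otail_def)
  moreover have "ohead src tgt a \<in> V" "otail src tgt a \<in> V"
    using e ends ab by (auto simp: ohead_def otail_def)
  ultimately show ?thesis using sc by (auto simp: strongly_connected_orientation_def)
qed

text \<open>The final computation: if D orients E0, the chain v vanishes off E0 and
  2 v - 1 = dp on D, then on each edge the chosen arc contributes 2 v_e^2 - v_e dp_e.\<close>
lemma orientation_sum_identity:
  assumes finE: "finite E" and E0E: "E0 \<subseteq> E" and orient: "is_orientation E0 D"
    and chain: "is_chain E v" and off: "\<And>e. e \<in> E \<Longrightarrow> e \<notin> E0 \<Longrightarrow> v (e, True) = 0"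
    and pot: "\<forall>a\<in>D. 2 * v a - 1 = p (ohead src tgt a) - p (otail src tgt a)"
  shows "(\<Sum>a\<in>D. v a) = 2 * qf E v - (\<Sum>e\<in>E. v (e, True) * (p (tgt e) - p (src e)))"
proof -
  define d where "d e = p (tgt e) - p (src e)" for e
  have arc: "v (e, (e, True) \<in> D) = 2 * (v (e, True) * v (e, True)) - v (e, True) * d e"
    if e: "e \<in> E0" for e
  proof (cases "(e, True) \<in> D")
    case True
    then have de: "d e = 2 * v (e, True) - 1" using pot by (auto simp: d_def ohead_def otail_def)
    show ?thesis using True by (simp add: de algebra_simps)
  next
    case False
    then have "(e, False) \<in> D" using orient e by (auto simp: is_orientation_def)
    then have "2 * v (e, False) - 1 = - d e" using pot by (auto simp: d_def ohead_def otail_def)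
    moreover have "v (e, False) = - v (e, True)" using chain_reverse[OF chain] e E0E by auto
    ultimately have de: "d e = 2 * v (e, True) + 1" by simp
    show ?thesis using False \<open>v (e, False) = - v (e, True)\<close> by (simp add: de algebra_simps)
  qed
  have "(\<Sum>a\<in>D. v a) = (\<Sum>e\<in>E0. v (e, (e, True) \<in> D))"
    by (rule sum_orientation[OF orient])
  also have "\<dots> = (\<Sum>e\<in>E0. 2 * (v (e, True) * v (e, True)) - v (e, True) * d e)"
    by (rule sum.cong[OF refl]) (rule arc)
  also have "\<dots> = (\<Sum>e\<in>E. 2 * (v (e, True) * v (e, True)) - v (e, True) * d e)"
    by (rule sum.mono_neutral_left[OF finE E0E]) (auto simp: off)
  also have "\<dots> = 2 * qf E v - (\<Sum>e\<in>E. v (e, True) * d e)"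
    unfolding qf_def inner_ch_def by (simp add: sum_subtractf sum_distrib_left)
  finally show ?thesis unfolding d_def .
qed

theorem mainTheorem20:
  fixes V :: "'v set" and E :: "'e set" and src tgt :: "'e \<Rightarrow> 'v"
    and D :: "'e oedge set" and vD :: "'e oedge \<Rightarrow> real"
  assumes "finite V" and "finite E" and "V \<noteq> {}"
    and "\<forall>e \<in> E. src e \<in> V \<and> tgt e \<in> V"
    and "connected_graph V E src tgt"
    and "strongly_connected_orientation V (E - bridges V E src tgt) src tgt D"
    and "is_flow V E src tgt vD"
    and "\<forall>C. is_circuit E src tgt C \<and> C \<subseteq> D \<longrightarrow>
           2 * inner_ch E vD (circ_chain C) = qf E (circ_chain C)"
  shows "2 * qf E vD = (\<Sum>a \<in> D. vD a)"
proof -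
  note finV = assms(1) and finE = assms(2) and ends = assms(4) and conn = assms(5)
    and sc = assms(6) and flow = assms(7) and cond = assms(8)
  define E0 where "E0 = E - bridges V E src tgt"
  have orient: "is_orientation E0 D" using sc by (simp add: strongly_connected_orientation_def E0_def)
  have DE: "D \<subseteq> oedges E" using orient by (auto simp: is_orientation_def oedges_def E0_def)
  have chain: "is_chain E vD" using flow by (simp add: is_flow_def)
  have "\<exists>p. \<forall>a\<in>D. 2 * vD a - 1 = p (ohead src tgt a) - p (otail src tgt a)"
  proof (rule potential_exists)
    show "sum_list (map (\<lambda>a. 2 * vD a - 1) ws) = 0" if "walk src tgt D x ws x" for ws x
      by (rule circuit_condition_closed_walks[OF finE DE orientation_inj_fst[OF orient] chain
            cond that])
    show "(ohead src tgt a, otail src tgt a) \<in> (dadj src tgt D)\<^sup>*" if "a \<in> D" for a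
      using strongly_connected_arc_reversible[OF sc _ that] ends by auto
  qed
  then obtain p where pot: "\<forall>a\<in>D. 2 * vD a - 1 = p (ohead src tgt a) - p (otail src tgt a)" ..
  have off: "vD (e, True) = 0" if "e \<in> E" "e \<notin> E0" for e
    using flow_bridge_zero[OF finV finE ends flow conn] that by (simp add: E0_def)
  show ?thesis
    using orientation_sum_identity[OF finE _ orient chain off pot]
      flow_orthogonal_coboundary[OF finV finE ends flow, of p]
    by (simp add: E0_def)
qed

end
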